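(* There exist constants $\varepsilon>0$ and $C>0$ such that $\tilde g(n)\le C(2-\varepsilon)^n$ for all positive integers $n$.
   Context: $[n]_0=\{0,1,\dots,n\}$, $S_1+S_2=\{u+v:u\in S_1,v\in S_2\}$. $\tilde g(n)$ is the sum of $2^{-|(S_1+S_2)\cap[n]_0|}$ over all pairs $S_1,S_2\subseteq[n]_0$ such that $0\in S_1\cap S_2$, $n+1\notin S_1+S_2$, and $k\in S_1+S_2$ for every integer $k$ with $\frac{3n}{4}+1\le k\le\frac{15n}{16}$. *)

theory Defs
  imports Complex_Main
begin

definition sumset :: "nat set \<Rightarrow> nat set \<Rightarrow> nat set" where
  "sumset S1 S2 = {u + v | u v. u \<in> S1 \<and> v \<in> S2}"

definition admissible :: "nat \<Rightarrow> nat set \<Rightarrow> nat set \<Rightarrow> bool" where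
  "admissible n S1 S2 \<longleftrightarrow>
     S1 \<subseteq> {0..n} \<and> S2 \<subseteq> {0..n} \<and> 0 \<in> S1 \<and> 0 \<in> S2 \<and>
     n + 1 \<notin> sumset S1 S2 \<and>
     (\<forall>k::nat. 3 * real n / 4 + 1 \<le> real k \<and> real k \<le> 15 * real n / 16 \<longrightarrow> k \<in> sumset S1 S2)"

definition g_tilde :: "nat \<Rightarrow> real" where
  "g_tilde n = (\<Sum>(S1, S2) \<in> {(S1, S2). admissible n S1 S2}.
                 (1/2) ^ card (sumset S1 S2 \<inter> {0..n}))"

end

theory Submission
  imports Defs "HOL-Library.FuncSet"
begin

(* Pair each i in {1..n div 2} with its mirror image n + 1 - i and record the profile
   (i \<in> S1, i \<in> S2, n+1-i \<in> S1, n+1-i \<in> S2).  Since n + 1 \<notin> S1 + S2, only 9 of the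
   16 profiles occur; since 0 \<in> S1 \<inter> S2, each member of a pair lies in the sumset as soon as
   it lies in S1 \<union> S2.  Hence 2^-|(S1+S2) \<inter> [n]_0| is bounded by a product of weights, one per
   pair, and the sum over all pairs (S1, S2) factorises: a pair contributes at most 9/2, and
   at most 13/4 if its upper member is forced into the sumset, which happens for the roughly
   3n/16 values i with n/16 < i \<le> n/4.  So g~(n) = O((9/2)^(n/2) (13/18)^(3n/16)), and
   (9/2)^8 (13/18)^3 < 63400 < 2^16. *)

lemma add_mem_sumset: "u \<in> S1 \<Longrightarrow> v \<in> S2 \<Longrightarrow> u + v \<in> sumset S1 S2"
  unfolding sumset_def by blast

lemma subset_sumset_left: "0 \<in> S2 \<Longrightarrow> S1 \<subseteq> sumset S1 S2"
  using add_mem_sumset[of _ S1 0 S2] by auto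

lemma subset_sumset_right: "0 \<in> S1 \<Longrightarrow> S2 \<subseteq> sumset S1 S2"
  using add_mem_sumset[of 0 S1 _ S2] by auto

definition pair_profile :: "nat \<Rightarrow> nat set \<Rightarrow> nat set \<Rightarrow> nat \<Rightarrow> bool \<times> bool \<times> bool \<times> bool" where
  "pair_profile n S1 S2 i = (i \<in> S1, i \<in> S2, n + 1 - i \<in> S1, n + 1 - i \<in> S2)"

definition compatible_profiles :: "(bool \<times> bool \<times> bool \<times> bool) set" where
  "compatible_profiles = {(a, b, c, d). \<not> (a \<and> d) \<and> \<not> (b \<and> c)}"

lemma pair_profile_compatible:
  assumes "n + 1 \<notin> sumset S1 S2" "i \<le> n + 1"
  shows "pair_profile n S1 S2 i \<in> compatible_profiles"
proof -
  have "i + (n + 1 - i) = n + 1" "(n + 1 - i) + i = n + 1"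
    using assms(2) by simp_all
  then show ?thesis
    using assms(1) add_mem_sumset[of i S1 "n + 1 - i" S2] add_mem_sumset[of "n + 1 - i" S1 i S2]
    unfolding pair_profile_def compatible_profiles_def by auto
qed

(* Upper bound for the factor 2^-k contributed by the pair {i, n + 1 - i}, where k counts its
   members in the sumset; forced says that n + 1 - i is known to lie in it. *)
definition block_weight :: "bool \<Rightarrow> bool \<times> bool \<times> bool \<times> bool \<Rightarrow> real" where
  "block_weight forced p = (case p of (a, b, c, d) \<Rightarrow>
     (if a \<or> b then 1/2 else 1) * (if c \<or> d \<or> forced then 1/2 else 1))"

lemma block_weight_nonneg: "block_weight forced p \<ge> 0"
  unfolding block_weight_def by (auto split: prod.splits)

lemma sum_block_weight:
  "(\<Sum>p\<in>compatible_profiles. block_weight forced p) = (if forced then 13/4 else 9/2)"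
proof -
  have enumeration: "compatible_profiles =
    {(False, False, False, False), (False, False, False, True), (False, False, True, False),
     (False, True, False, False), (False, True, False, True), (True, False, False, False),
     (True, False, True, False), (False, False, True, True), (True, True, False, False)}"
    (is "_ = ?enumeration")
  proof (rule set_eqI)
    fix p :: "bool \<times> bool \<times> bool \<times> bool"
    obtain a b c d where "p = (a, b, c, d)"
      by (cases p)
    then show "p \<in> compatible_profiles \<longleftrightarrow> p \<in> ?enumeration"
      unfolding compatible_profiles_def by (cases a; cases b; cases c; cases d) simp_all
  qed
  show ?thesis
    unfolding enumeration by (simp add: block_weight_def)
qed

lemma sum_prod_block_weight:
  assumes "finite P" "J \<subseteq> P"
  shows "(\<Sum>g\<in>PiE P (\<lambda>_. compatible_profiles). \<Prod>i\<in>P. block_weight (i \<in> J) (g i))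
       = (13/4)^card J * (9/2)^(card P - card J)"
proof -
  have "(\<Sum>g\<in>PiE P (\<lambda>_. compatible_profiles). \<Prod>i\<in>P. block_weight (i \<in> J) (g i))
      = (\<Prod>i\<in>P. \<Sum>p\<in>compatible_profiles. block_weight (i \<in> J) p)"
    using assms(1) by (simp add: prod_sum_PiE)
  also have "\<dots> = (\<Prod>i\<in>P. if i \<in> J then 13/4 else 9/2)"
    by (simp add: sum_block_weight)
  also have "\<dots> = (13/4)^card J * (9/2)^(card (P - J))"
    using assms by (simp add: prod.If_cases Int_absorb1 Diff_eq[symmetric])
  finally show ?thesis
    using assms by (simp add: card_Diff_subset finite_subset)
qed

lemma prod_if_mem_eq_power:
  assumes "finite P" "L \<subseteq> P"
  shows "(\<Prod>i\<in>P. if i \<in> L then (c::real) else 1) = c ^ card L"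
  using assms by (simp add: prod.If_cases Int_absorb1)

lemma half_power_card_sumset_le_prod_block_weight:
  assumes "0 \<in> S1" "0 \<in> S2" and forced: "\<forall>i\<in>J. n + 1 - i \<in> sumset S1 S2"
  shows "(1/2::real)^card (sumset S1 S2 \<inter> {0..n})
     \<le> (\<Prod>i\<in>{1..n div 2}. block_weight (i \<in> J) (pair_profile n S1 S2 i))"
proof -
  define P where "P = {1..n div 2}"
  define L where "L = {i\<in>P. i \<in> S1 \<or> i \<in> S2}"
  define U where "U = {i\<in>P. n + 1 - i \<in> S1 \<or> n + 1 - i \<in> S2 \<or> i \<in> J}"
  have "finite P" "L \<subseteq> P" "U \<subseteq> P"
    unfolding P_def L_def U_def by auto
  then have finite: "finite L" "finite U"
    by (auto intro: finite_subset)
  have "(\<Prod>i\<in>P. block_weight (i \<in> J) (pair_profile n S1 S2 i))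
      = (\<Prod>i\<in>P. (if i \<in> L then 1/2 else 1) * (if i \<in> U then 1/2 else 1))"
    by (rule prod.cong) (auto simp: block_weight_def pair_profile_def L_def U_def)
  also have "\<dots> = (1/2)^card L * (1/2)^card U"
    using \<open>finite P\<close> \<open>L \<subseteq> P\<close> \<open>U \<subseteq> P\<close> by (simp add: prod.distrib prod_if_mem_eq_power)
  also have "card U = card (((-) (n + 1)) ` U)"
    by (rule card_image[symmetric]) (auto simp: inj_on_def U_def P_def)
  finally have prod_eq: "(\<Prod>i\<in>P. block_weight (i \<in> J) (pair_profile n S1 S2 i))
      = (1/2)^(card L + card (((-) (n + 1)) ` U))"
    by (simp add: power_add)
  have "L \<inter> ((-) (n + 1)) ` U = {}"
    unfolding L_def U_def P_def by auto
  then have "card L + card (((-) (n + 1)) ` U) = card (L \<union> ((-) (n + 1)) ` U)"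
    using finite by (simp add: card_Un_disjoint)
  also have "\<dots> \<le> card (sumset S1 S2 \<inter> {0..n})"
  proof (rule card_mono)
    show "L \<union> ((-) (n + 1)) ` U \<subseteq> sumset S1 S2 \<inter> {0..n}"
      using subset_sumset_left[OF \<open>0 \<in> S2\<close>] subset_sumset_right[OF \<open>0 \<in> S1\<close>] forced
      unfolding L_def U_def P_def by auto
  qed simp
  finally show ?thesis
    unfolding P_def[symmetric] prod_eq by (rule power_decreasing) auto
qed

lemma mirror_pair_cases:
  fixes z n :: nat
  assumes "z \<le> n"
  obtains "z = 0" | "z \<in> {1..n div 2}" | "z = (n + 1) div 2" | "n + 1 - z \<in> {1..n div 2}"
proof -
  have "n = 2 * (n div 2) + n mod 2" "n mod 2 < 2"
    by simp_all
  then have "(n + 1) div 2 = n div 2 + n mod 2"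
    by linarith
  then show ?thesis
    using that assms \<open>n = 2 * (n div 2) + n mod 2\<close> \<open>n mod 2 < 2\<close> unfolding atLeastAtMost_iff
    by linarith
qed

lemma set_eq_by_complementary_pairs:
  fixes S T :: "nat set"
  assumes "S \<subseteq> {0..n}" "T \<subseteq> {0..n}" "0 \<in> S" "0 \<in> T"
    and "(n + 1) div 2 \<in> S \<longleftrightarrow> (n + 1) div 2 \<in> T"
    and "\<forall>i\<in>{1..n div 2}. (i \<in> S \<longleftrightarrow> i \<in> T) \<and> (n + 1 - i \<in> S \<longleftrightarrow> n + 1 - i \<in> T)"
  shows "S = T"
proof (rule set_eqI)
  fix z
  show "z \<in> S \<longleftrightarrow> z \<in> T"
  proof (cases "z \<le> n")
    case True
    then show ?thesis
    proof (cases rule: mirror_pair_cases)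
      case 1
      then show ?thesis
        using assms(3,4) by simp
    next
      case 2
      then show ?thesis
        using assms(6) by blast
    next
      case 3
      then show ?thesis
        using assms(5) by simp
    next
      case 4
      with assms(6) have "n + 1 - (n + 1 - z) \<in> S \<longleftrightarrow> n + 1 - (n + 1 - z) \<in> T"
        by blast
      with True show ?thesis
        by simp
    qed
  next
    case False
    then show ?thesis
      using assms(1,2) by auto
  qed
qed

(* For odd n the middle element (n + 1) div 2 is its own mirror image and is not covered by the
   pairs; for even n the extra two bits are redundant and only cost a factor 4. *)
definition pair_code ::
    "nat \<Rightarrow> nat set \<times> nat set \<Rightarrow> (nat \<Rightarrow> bool \<times> bool \<times> bool \<times> bool) \<times> bool \<times> bool" where
  "pair_code n = (\<lambda>(S1, S2).
     (restrict (pair_profile n S1 S2) {1..n div 2}, ((n + 1) div 2 \<in> S1, (n + 1) div 2 \<in> S2)))"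

lemma inj_on_pair_code:
  "inj_on (pair_code n) {(S1, S2). S1 \<subseteq> {0..n} \<and> S2 \<subseteq> {0..n} \<and> 0 \<in> S1 \<and> 0 \<in> S2}"
proof (rule inj_onI, clarify)
  fix S1 S2 T1 T2 :: "nat set"
  assume S: "S1 \<subseteq> {0..n}" "S2 \<subseteq> {0..n}" "0 \<in> S1" "0 \<in> S2"
    and T: "T1 \<subseteq> {0..n}" "T2 \<subseteq> {0..n}" "0 \<in> T1" "0 \<in> T2"
    and code: "pair_code n (S1, S2) = pair_code n (T1, T2)"
  have "pair_profile n S1 S2 i = pair_profile n T1 T2 i" if "i \<in> {1..n div 2}" for i
    using fun_cong[OF arg_cong[OF code, of fst], of i] that by (simp add: pair_code_def)
  moreover have "(n + 1) div 2 \<in> S1 \<longleftrightarrow> (n + 1) div 2 \<in> T1" "(n + 1) div 2 \<in> S2 \<longleftrightarrow> (n + 1) div 2 \<in> T2"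
    using code by (simp_all add: pair_code_def)
  ultimately have "S1 = T1" "S2 = T2"
    using S T by (intro set_eq_by_complementary_pairs[of _ n]; simp add: pair_profile_def)+
  then show "S1 = T1 \<and> S2 = T2" ..
qed

lemma sum_half_power_card_sumset_le:
  assumes pairs: "\<And>S1 S2. (S1, S2) \<in> A \<Longrightarrow>
      S1 \<subseteq> {0..n} \<and> S2 \<subseteq> {0..n} \<and> 0 \<in> S1 \<and> 0 \<in> S2 \<and> n + 1 \<notin> sumset S1 S2 \<and>
      (\<forall>i\<in>J. n + 1 - i \<in> sumset S1 S2)"
    and "J \<subseteq> {1..n div 2}"
  shows "(\<Sum>(S1, S2)\<in>A. (1/2::real)^card (sumset S1 S2 \<inter> {0..n}))
       \<le> 4 * (13/4)^card J * (9/2)^(n div 2 - card J)"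
proof -
  define P where "P = {1..n div 2}"
  define W where "W = (\<lambda>(g, b::bool \<times> bool). \<Prod>i\<in>P. block_weight (i \<in> J) (g i))"
  have card_bool_pairs: "card (UNIV :: (bool \<times> bool) set) = 4"
    by (simp add: UNIV_Times_UNIV[symmetric] card_cartesian_product del: UNIV_Times_UNIV)
  have A_sub: "A \<subseteq> {(S1, S2). S1 \<subseteq> {0..n} \<and> S2 \<subseteq> {0..n} \<and> 0 \<in> S1 \<and> 0 \<in> S2}"
    by (auto dest!: pairs)
  then have inj: "inj_on (pair_code n) A"
    by (rule inj_on_subset[OF inj_on_pair_code])
  have "finite A"
    using A_sub by (intro finite_subset[of A "Pow {0..n} \<times> Pow {0..n}"]) auto
  have code_range: "pair_code n ` A \<subseteq> PiE P (\<lambda>_. compatible_profiles) \<times> UNIV"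
    using pairs pair_profile_compatible unfolding pair_code_def P_def by fastforce
  have "(\<Sum>(S1, S2)\<in>A. (1/2::real)^card (sumset S1 S2 \<inter> {0..n})) \<le> (\<Sum>x\<in>A. W (pair_code n x))"
    using pairs half_power_card_sumset_le_prod_block_weight
    by (intro sum_mono) (auto simp: W_def pair_code_def P_def intro!: prod.cong)
  also have "\<dots> = (\<Sum>y\<in>pair_code n ` A. W y)"
    by (simp add: sum.reindex[OF inj])
  also have "\<dots> \<le> (\<Sum>y\<in>PiE P (\<lambda>_. compatible_profiles) \<times> UNIV. W y)"
    using code_range by (intro sum_mono2)
      (auto simp: P_def W_def block_weight_nonneg intro!: finite_PiE prod_nonneg)
  also have "\<dots> = 4 * (\<Sum>g\<in>PiE P (\<lambda>_. compatible_profiles). \<Prod>i\<in>P. block_weight (i \<in> J) (g i))"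
    using card_bool_pairs by (simp add: W_def sum.cartesian_product[symmetric] sum_distrib_left)
  also have "\<dots> = 4 * ((13/4)^card J * (9/2)^(n div 2 - card J))"
    using \<open>J \<subseteq> {1..n div 2}\<close> by (simp add: sum_prod_block_weight P_def)
  finally show ?thesis
    by (simp add: mult.assoc)
qed

lemma admissible_forces_upper_member:
  assumes "admissible n S1 S2" "n + 16 \<le> 16 * i" "4 * i \<le> n"
  shows "n + 1 - i \<in> sumset S1 S2"
proof -
  have "real (n + 1 - i) = real n + 1 - real i"
    using assms(3) by (simp add: of_nat_diff)
  moreover have "real n + 16 \<le> 16 * real i" "4 * real i \<le> real n"
    using assms(2,3) by (simp_all only: of_nat_le_iff[symmetric] of_nat_add of_nat_mult of_nat_numeral)
  ultimately have "3 * real n / 4 + 1 \<le> real (n + 1 - i) \<and> real (n + 1 - i) \<le> 15 * real n / 16"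
    by simp
  then show ?thesis
    using assms(1) unfolding admissible_def by blast
qed

lemma g_tilde_le_block_bound:
  fixes n :: nat
  defines "t \<equiv> n div 4 - n div 16 - 1"
  shows "g_tilde n \<le> 4 * (13/4)^t * (9/2)^(n div 2 - t)"
proof -
  define J where "J = {n div 16 + 2 .. n div 4}"
  have "J \<subseteq> {1..n div 2}" and "card J = t"
    unfolding J_def t_def by auto
  have J_range: "n + 16 \<le> 16 * i" "4 * i \<le> n" if "i \<in> J" for i
    using that unfolding J_def by auto
  have "(\<Sum>(S1, S2)\<in>{(S1, S2). admissible n S1 S2}. (1/2::real)^card (sumset S1 S2 \<inter> {0..n}))
      \<le> 4 * (13/4)^card J * (9/2)^(n div 2 - card J)"
  proof (rule sum_half_power_card_sumset_le[OF _ \<open>J \<subseteq> {1..n div 2}\<close>])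
    fix S1 S2
    assume "(S1, S2) \<in> {(S1, S2). admissible n S1 S2}"
    then have adm: "admissible n S1 S2" by simp
    show "S1 \<subseteq> {0..n} \<and> S2 \<subseteq> {0..n} \<and> 0 \<in> S1 \<and> 0 \<in> S2 \<and> n + 1 \<notin> sumset S1 S2 \<and>
        (\<forall>i\<in>J. n + 1 - i \<in> sumset S1 S2)"
      using adm admissible_forces_upper_member[OF adm] J_range unfolding admissible_def by blast
  qed
  then show ?thesis
    unfolding g_tilde_def \<open>card J = t\<close> .
qed

lemma block_bound_le_exponential:
  fixes t n :: nat
  assumes "t \<le> n div 2" "3 * (n div 16) \<le> t + 1"
  shows "(13/4::real)^t * (9/2)^(n div 2 - t) \<le> 18/13 * (9/2)^7 * (1999/1000)^n"
proof -
  define q where "q = n div 16"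
  have "n div 2 \<le> 8 * q + 7" "16 * q \<le> n"
    unfolding q_def by presburger+
  have "(9/2::real)^(n div 2) = (9/2)^t * (9/2)^(n div 2 - t)"
    using assms(1) by (simp add: power_add[symmetric])
  then have "(13/4::real)^t * (9/2)^(n div 2 - t) = (9/2)^(n div 2) * (13/18)^t"
    by (simp add: power_mult_distrib[symmetric])
  also have "\<dots> \<le> (9/2)^(8 * q + 7) * (18/13 * (13/18)^(3 * q))"
  proof (rule mult_mono)
    show "(9/2::real)^(n div 2) \<le> (9/2)^(8 * q + 7)"
      using \<open>n div 2 \<le> 8 * q + 7\<close> by (rule power_increasing) simp
    have "(13/18::real)^(t + 1) \<le> (13/18)^(3 * q)"
      using assms(2) unfolding q_def by (rule power_decreasing) simp_all
    then show "(13/18::real)^t \<le> 18/13 * (13/18)^(3 * q)"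
      by simp
  qed simp_all
  also have "\<dots> = 18/13 * (9/2)^7 * ((9/2)^8 * (13/18)^3)^q"
    by (simp add: power_add power_mult power_mult_distrib)
  also have "\<dots> \<le> 18/13 * (9/2)^7 * ((1999/1000)^16)^q"
    by (intro mult_left_mono power_mono) (simp_all add: power_divide)
  also have "\<dots> \<le> 18/13 * (9/2)^7 * (1999/1000)^n"
    unfolding power_mult[symmetric] using \<open>16 * q \<le> n\<close> by (intro mult_left_mono power_increasing) simp_all
  finally show ?thesis .
qed

theorem mainTheorem13:
  shows "\<exists>\<epsilon>::real. \<exists>C::real. \<epsilon> > 0 \<and> C > 0 \<and>
           (\<forall>n::nat. n \<ge> 1 \<longrightarrow> g_tilde n \<le> C * (2 - \<epsilon>) ^ n)"
proof (intro exI conjI allI impI)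
  fix n :: nat
  define t where "t = n div 4 - n div 16 - 1"
  have "4 * (n div 16) \<le> n div 4" "n div 4 \<le> n div 2"
    by presburger+
  then have "t \<le> n div 2" "3 * (n div 16) \<le> t + 1"
    unfolding t_def by linarith+
  then have "4 * ((13/4)^t * (9/2)^(n div 2 - t)) \<le> 4 * (18/13 * (9/2)^7 * (1999/1000::real)^n)"
    by (intro mult_left_mono block_bound_le_exponential) simp_all
  with g_tilde_le_block_bound[of n]
  show "g_tilde n \<le> (4 * 18/13 * (9/2)^7) * (2 - 1/1000) ^ n"
    unfolding t_def by simp
qed simp_all

end
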